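(* Let $W\in\mathbb{D}_n$ be a nonsingular Dale matrix satisfying the Ground Assumption with $\|W\|_F=\sqrt{\mathrm{trace}(W^TW)}<1$. Then for every $b\in\mathbb{R}^n_{\ge0}$ the network $(W,b)$ has a unique fixed point, and it is globally exponentially stable; in particular every fixed point is asymptotically stable. Moreover $\mathcal{C}(W)=\mathcal{SC}(W)=\mathrm{code}(G_\mathcal{E},\mathcal{E_U})$.
   Context: Threshold-linear network: $\dot x_i=-x_i+[\sum_j W_{ij}x_j+b_i]_+$ with $[y]_+=\max(0,y)$; a fixed point is $x^*$ with $x^*=[Wx^*+b]_+$. A Dale matrix $W\in\mathbb{D}_n$ is an $n\times n$ real matrix with a partition $[n]=\mathcal{E}\sqcup\mathcal{I}$ such that $W_{ii}=0$, $W_{ji}\ge0$ for all $j$ if $i\in\mathcal{E}$, $W_{ji}\le 0$ for all $j$ if $i\in\mathcal{I}$. Ground Assumption: $(I-W)_\sigma$ nonsingular for every nonempty $\sigma\subset[n]$. Excitatory support: $\mathrm{supp}_+x=\{i\in\mathcal{E}:x_i>0\}$. Combinatorial code: $\mathcal{C}(W)=\{\mathrm{supp}_+x^*: b\in\mathbb{R}^n_{\ge0},\ x^*\in\mathbb{R}^n_{\ge0}\text{ a fixed point of }(W,b)\}$. Stable combinatorial code: $\mathcal{SC}(W)=\{\mathrm{supp}_+x^*: b\in\mathbb{R}^n_{\ge0},\ x^*\in\mathbb{R}^n_{\ge0}\text{ an asymptotically stable fixed point of }(W,b)\}$. $G_\mathcal{E}$: directed graph on $\mathcal{E}$ with arc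 $i\to j$ iff $i\ne j$ and $W_{ji}>0$. $\mathcal{E_U}=\{j\in\mathcal{E}:W_{ji}=0\ \forall i\in\mathcal{I}\}$. $N^+_G(\sigma)=\bigcup_{i\in\sigma}\{j: i\to j\}$, and $\mathrm{code}(G,U)=\{\sigma\subset\mathcal{E}: N^+_G(\sigma)\cap U\subset\sigma\}$. *)

theory Defs
  imports "HOL-Analysis.Analysis"
begin

text \<open>Index set [n] is the finite type 'n. Matrices: W $ j $ i is the entry in row j, column i,
  so (W *v x) $ j = sum_i W $ j $ i * x $ i.\<close>

definition relu :: "real^'n \<Rightarrow> real^'n" where
  "relu v = (\<chi> i. max 0 (v $ i))"

definition tln_field :: "real^'n^'n \<Rightarrow> real^'n \<Rightarrow> real^'n \<Rightarrow> real^'n" where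
  "tln_field W b x = - x + relu (W *v x + b)"

definition is_fixed_point :: "real^'n^'n \<Rightarrow> real^'n \<Rightarrow> real^'n \<Rightarrow> bool" where
  "is_fixed_point W b x \<longleftrightarrow> x = relu (W *v x + b)"

definition is_trajectory :: "real^'n^'n \<Rightarrow> real^'n \<Rightarrow> (real \<Rightarrow> real^'n) \<Rightarrow> bool" where
  "is_trajectory W b x \<longleftrightarrow>
     (\<forall>t\<ge>0. (x has_vector_derivative tln_field W b (x t)) (at t within {0..}))"

definition lyapunov_stable :: "real^'n^'n \<Rightarrow> real^'n \<Rightarrow> real^'n \<Rightarrow> bool" where
  "lyapunov_stable W b xs \<longleftrightarrow>
     (\<forall>\<epsilon>>0. \<exists>\<delta>>0. \<forall>x. is_trajectory W b x \<and> norm (x 0 - xs) < \<delta> \<longrightarrow>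
        (\<forall>t\<ge>0. norm (x t - xs) < \<epsilon>))"

definition attractive :: "real^'n^'n \<Rightarrow> real^'n \<Rightarrow> real^'n \<Rightarrow> bool" where
  "attractive W b xs \<longleftrightarrow>
     (\<exists>\<delta>>0. \<forall>x. is_trajectory W b x \<and> norm (x 0 - xs) < \<delta> \<longrightarrow> (x \<longlongrightarrow> xs) at_top)"

definition asymptotically_stable :: "real^'n^'n \<Rightarrow> real^'n \<Rightarrow> real^'n \<Rightarrow> bool" where
  "asymptotically_stable W b xs \<longleftrightarrow>
     is_fixed_point W b xs \<and> lyapunov_stable W b xs \<and> attractive W b xs"

definition globally_exponentially_stable :: "real^'n^'n \<Rightarrow> real^'n \<Rightarrow> real^'n \<Rightarrow> bool" where
  "globally_exponentially_stable W b xs \<longleftrightarrow>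
     is_fixed_point W b xs \<and>
     (\<exists>k>0. \<exists>c>0. \<forall>x. is_trajectory W b x \<longrightarrow>
        (\<forall>t\<ge>0. norm (x t - xs) \<le> k * exp (- c * t) * norm (x 0 - xs)))"

text \<open>Dale matrix with excitatory set E (inhibitory set is the complement - E).\<close>
definition dale :: "real^'n^'n \<Rightarrow> 'n set \<Rightarrow> bool" where
  "dale W E \<longleftrightarrow> (\<forall>i. W $ i $ i = 0) \<and>
     (\<forall>i\<in>E. \<forall>j. W $ j $ i \<ge> 0) \<and> (\<forall>i\<in>-E. \<forall>j. W $ j $ i \<le> 0)"

text \<open>(I - W)_\<sigma> nonsingular: the principal submatrix indexed by \<sigma> has trivial kernel.\<close>
definition principal_nonsingular :: "real^'n^'n \<Rightarrow> 'n set \<Rightarrow> bool" where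
  "principal_nonsingular A \<sigma> \<longleftrightarrow>
     (\<forall>x::real^'n. (\<forall>i. i \<notin> \<sigma> \<longrightarrow> x $ i = 0) \<and> (\<forall>i\<in>\<sigma>. (A *v x) $ i = 0) \<longrightarrow> x = 0)"

definition ground_assumption :: "real^'n^'n \<Rightarrow> bool" where
  "ground_assumption W \<longleftrightarrow> (\<forall>\<sigma>. \<sigma> \<noteq> {} \<longrightarrow> principal_nonsingular (mat 1 - W) \<sigma>)"

definition frobenius_norm :: "real^'n^'n \<Rightarrow> real" where
  "frobenius_norm W = sqrt (trace (transpose W ** W))"

definition nonneg_vec :: "real^'n \<Rightarrow> bool" where
  "nonneg_vec v \<longleftrightarrow> (\<forall>i. v $ i \<ge> 0)"

definition supp_plus :: "'n set \<Rightarrow> real^'n \<Rightarrow> 'n set" where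
  "supp_plus E x = {i\<in>E. x $ i > 0}"

definition comb_code :: "real^'n^'n \<Rightarrow> 'n set \<Rightarrow> 'n set set" where
  "comb_code W E = {supp_plus E x | b x. nonneg_vec b \<and> nonneg_vec x \<and> is_fixed_point W b x}"

definition stable_comb_code :: "real^'n^'n \<Rightarrow> 'n set \<Rightarrow> 'n set set" where
  "stable_comb_code W E =
     {supp_plus E x | b x. nonneg_vec b \<and> nonneg_vec x \<and> asymptotically_stable W b x}"

definition GE_arc :: "real^'n^'n \<Rightarrow> 'n set \<Rightarrow> 'n \<Rightarrow> 'n \<Rightarrow> bool" where
  "GE_arc W E i j \<longleftrightarrow> i \<in> E \<and> j \<in> E \<and> i \<noteq> j \<and> W $ j $ i > 0"

definition E_U :: "real^'n^'n \<Rightarrow> 'n set \<Rightarrow> 'n set" where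
  "E_U W E = {j\<in>E. \<forall>i\<in>-E. W $ j $ i = 0}"

definition out_nbhd :: "('n \<Rightarrow> 'n \<Rightarrow> bool) \<Rightarrow> 'n set \<Rightarrow> 'n set" where
  "out_nbhd G \<sigma> = (\<Union>i\<in>\<sigma>. {j. G i j})"

definition graph_code :: "('n \<Rightarrow> 'n \<Rightarrow> bool) \<Rightarrow> 'n set \<Rightarrow> 'n set \<Rightarrow> 'n set set" where
  "graph_code G E U = {\<sigma>. \<sigma> \<subseteq> E \<and> out_nbhd G \<sigma> \<inter> U \<subseteq> \<sigma>}"

end

theory Submission
  imports Defs
begin

text \<open>Since \<open>[\<cdot>]\<^sub>+\<close> is 1-Lipschitz and \<open>\<parallel>W v\<parallel> \<le> \<parallel>W\<parallel>\<^sub>F \<parallel>v\<parallel>\<close>, the map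
  \<open>x \<mapsto> [W x + b]\<^sub>+\<close> is a contraction, so the fixed point \<open>x\<^sup>*\<close> exists and is unique. The same
  estimate gives \<open>\<langle>x - x\<^sup>*, x'\<rangle> \<le> -(1 - \<parallel>W\<parallel>\<^sub>F) \<parallel>x - x\<^sup>*\<parallel>\<^sup>2\<close> along trajectories, hence
  exponential convergence; in particular every fixed point is asymptotically stable and the two
  codes coincide. The excitatory support of a nonnegative fixed point is closed under arcs into
  \<open>E\<^sub>U\<close>, since such a neuron gets no inhibition and positive excitation. Conversely, for a closed
  \<open>\<sigma> \<subseteq> E\<close> we take a positive subsolution of the network restricted to \<open>\<sigma>\<close>, drive all
  inhibitory neurons strongly enough to silence the rest of \<open>E\<close>, and read off \<open>b = x - W x\<close>.\<close>

lemma power2_norm_vec: "(norm (x :: real^'n))\<^sup>2 = (\<Sum>i\<in>UNIV. (x $ i)\<^sup>2)"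
  by (simp add: norm_vec_def L2_set_def sum_nonneg)

lemma frobenius_norm_rows: "frobenius_norm W = sqrt (\<Sum>k\<in>UNIV. (norm (W $ k))\<^sup>2)"
proof -
  have "trace (transpose W ** W) = (\<Sum>i\<in>UNIV. \<Sum>k\<in>UNIV. (W $ k $ i)\<^sup>2)"
    by (simp add: trace_def matrix_matrix_mult_def transpose_def power2_eq_square)
  also have "\<dots> = (\<Sum>k\<in>UNIV. (norm (W $ k))\<^sup>2)"
    by (subst sum.swap) (simp add: power2_norm_vec)
  finally show ?thesis by (simp add: frobenius_norm_def)
qed

lemma frobenius_norm_nonneg: "0 \<le> frobenius_norm W"
  by (simp add: frobenius_norm_rows sum_nonneg)

lemma frobenius_norm_mono_rows:
  assumes "\<And>k. norm (A $ k) \<le> norm (B $ k)"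
  shows "frobenius_norm A \<le> frobenius_norm B"
  unfolding frobenius_norm_rows
  by (intro real_sqrt_le_mono sum_mono power_mono assms norm_ge_zero)

lemma norm_matrix_vector_mult_le_frobenius:
  "norm (W *v v) \<le> frobenius_norm W * norm v"
proof (rule power2_le_imp_le)
  have "(norm (W *v v))\<^sup>2 = (\<Sum>j\<in>UNIV. (W $ j \<bullet> v)\<^sup>2)"
    by (simp add: power2_norm_vec matrix_vector_mult_def inner_vec_def)
  also have "\<dots> \<le> (\<Sum>j\<in>UNIV. (norm (W $ j) * norm v)\<^sup>2)"
    by (intro sum_mono abs_le_square_iff[THEN iffD1])
      (simp add: Cauchy_Schwarz_ineq2)
  also have "\<dots> = (frobenius_norm W * norm v)\<^sup>2"
    by (simp add: frobenius_norm_rows power_mult_distrib sum_distrib_right sum_nonneg)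
  finally show "(norm (W *v v))\<^sup>2 \<le> (frobenius_norm W * norm v)\<^sup>2" .
qed (simp add: frobenius_norm_nonneg)

lemma relu_component [simp]: "relu v $ i = max 0 (v $ i)"
  by (simp add: relu_def)

lemma norm_relu_diff_le: "norm (relu u - relu v) \<le> norm (u - v)"
  unfolding norm_vec_def by (rule L2_set_mono) (auto simp: abs_le_iff max_def)

lemma norm_relu_affine_diff_le:
  "norm (relu (W *v x + b) - relu (W *v y + b)) \<le> frobenius_norm W * norm (x - y)"
proof -
  have "norm (relu (W *v x + b) - relu (W *v y + b)) \<le> norm (W *v (x - y))"
    using norm_relu_diff_le[of "W *v x + b" "W *v y + b"]
    by (simp add: matrix_vector_mult_diff_distrib)
  also have "\<dots> \<le> frobenius_norm W * norm (x - y)"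
    by (rule norm_matrix_vector_mult_le_frobenius)
  finally show ?thesis .
qed

lemma ex1_fixed_point:
  assumes "frobenius_norm W < 1"
  shows "\<exists>!x. is_fixed_point W b x"
proof -
  have "\<exists>!x. relu (W *v x + b) = x"
    using frobenius_norm_nonneg assms norm_relu_affine_diff_le
    by (intro banach_fix_type[of "frobenius_norm W"]) (auto simp: dist_norm)
  then show ?thesis
    unfolding is_fixed_point_def by metis
qed

lemma fixed_point_nonneg: "is_fixed_point W b x \<Longrightarrow> 0 \<le> x $ i"
  unfolding is_fixed_point_def by (metis relu_component max.cobounded1)

lemma inner_tln_field_le:
  assumes "is_fixed_point W b p"
  shows "(y - p) \<bullet> tln_field W b y \<le> (frobenius_norm W - 1) * (norm (y - p))\<^sup>2"
proof -
  define r where "r = relu (W *v y + b) - relu (W *v p + b)"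
  have field: "tln_field W b y = r - (y - p)"
    using assms unfolding tln_field_def is_fixed_point_def r_def by (simp add: algebra_simps)
  have "(y - p) \<bullet> tln_field W b y = (y - p) \<bullet> r - (norm (y - p))\<^sup>2"
    by (simp add: field inner_diff_right power2_norm_eq_inner)
  also have "(y - p) \<bullet> r \<le> norm (y - p) * norm r"
    by (rule norm_cauchy_schwarz)
  also have "\<dots> \<le> norm (y - p) * (frobenius_norm W * norm (y - p))"
    unfolding r_def by (intro mult_left_mono norm_relu_affine_diff_le norm_ge_zero)
  finally show ?thesis
    by (simp add: power2_eq_square algebra_simps)
qed

text \<open>Gronwall's argument: \<open>exp (2 c t) * \<parallel>x t - p\<parallel>\<^sup>2\<close> is nonincreasing.\<close>
lemma dissipative_exp_decay:
  fixes x :: "real \<Rightarrow> 'a::real_inner"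
  assumes deriv: "\<And>t. 0 \<le> t \<Longrightarrow> (x has_vector_derivative x' t) (at t within {0..})"
    and dissipative: "\<And>t. 0 \<le> t \<Longrightarrow> (x t - p) \<bullet> x' t \<le> - c * (norm (x t - p))\<^sup>2"
    and "0 \<le> t"
  shows "norm (x t - p) \<le> exp (- c * t) * norm (x 0 - p)"
proof -
  define g where "g s = exp (2 * c * s) * ((x s - p) \<bullet> (x s - p))" for s
  have "continuous_on {0..} x"
    unfolding continuous_on_eq_continuous_within
    using deriv has_vector_derivative_continuous by (metis atLeast_iff)
  then have "continuous_on {0..t} g"
    unfolding g_def by (intro continuous_intros) (auto elim: continuous_on_subset)
  moreover have g_deriv: "\<exists>d. (g has_real_derivative d) (at s) \<and> d \<le> 0" if "0 < s" for s
  proof -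
    have "(x has_vector_derivative x' s) (at s)"
      using deriv[of s] that at_within_interior[of s "{0..}"] by simp
    then have "(g has_real_derivative
        exp (2 * c * s) * (2 * c * ((x s - p) \<bullet> (x s - p)) + 2 * ((x s - p) \<bullet> x' s))) (at s)"
      unfolding g_def has_vector_derivative_def has_field_derivative_def
      by (auto intro!: derivative_eq_intros simp: algebra_simps inner_commute)
    moreover have "2 * c * ((x s - p) \<bullet> (x s - p)) + 2 * ((x s - p) \<bullet> x' s) \<le> 0"
      using dissipative[of s] that by (simp add: power2_norm_eq_inner)
    ultimately show ?thesis
      using mult_nonneg_nonpos[OF exp_ge_zero] by blast
  qed
  ultimately have "g t \<le> g 0"
    by (intro DERIV_nonpos_imp_decreasing_open[OF \<open>0 \<le> t\<close>]) blast+
  then have "exp (2 * c * t) * (norm (x t - p))\<^sup>2 \<le> (norm (x 0 - p))\<^sup>2"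
    by (simp add: g_def power2_norm_eq_inner)
  then have "(norm (x t - p))\<^sup>2 \<le> exp (- (2 * c * t)) * (norm (x 0 - p))\<^sup>2"
    by (simp add: exp_minus field_simps)
  also have "\<dots> = (exp (- c * t) * norm (x 0 - p))\<^sup>2"
    by (simp add: power_mult_distrib flip: exp_of_nat_mult)
  finally show ?thesis
    by (rule power2_le_imp_le) simp
qed

lemma trajectory_exp_decay:
  assumes "is_fixed_point W b p" and "is_trajectory W b x" and "0 \<le> t"
  shows "norm (x t - p) \<le> exp (- (1 - frobenius_norm W) * t) * norm (x 0 - p)"
proof (rule dissipative_exp_decay[where x = x and x' = "\<lambda>t. tln_field W b (x t)" and p = p])
  show "(x has_vector_derivative tln_field W b (x s)) (at s within {0..})" if "0 \<le> s" for s
    using assms(2) that unfolding is_trajectory_def by blast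
  show "(x s - p) \<bullet> tln_field W b (x s) \<le> - (1 - frobenius_norm W) * (norm (x s - p))\<^sup>2"
    for s
    using inner_tln_field_le[OF assms(1), of "x s"] by (simp only: minus_diff_eq)
qed fact

lemma fixed_point_globally_exponentially_stable:
  assumes "frobenius_norm W < 1" and "is_fixed_point W b p"
  shows "globally_exponentially_stable W b p"
proof -
  have "norm (x t - p) \<le> 1 * exp (- (1 - frobenius_norm W) * t) * norm (x 0 - p)"
    if "is_trajectory W b x" "0 \<le> t" for x t
    using trajectory_exp_decay[OF assms(2) that] by simp
  moreover have "0 < 1 - frobenius_norm W"
    using assms(1) by simp
  ultimately show ?thesis
    unfolding globally_exponentially_stable_def
    using assms(2) zero_less_one by blast
qed

lemma tendsto_exp_decay_at_top:
  assumes "0 < (c::real)"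
  shows "((\<lambda>t. exp (- c * t) * k) \<longlongrightarrow> 0) at_top"
proof -
  have "filterlim (\<lambda>t. c * t) at_top at_top"
    by (rule filterlim_tendsto_pos_mult_at_top[OF tendsto_const assms filterlim_ident])
  then have "filterlim (\<lambda>t. - c * t) at_bot at_top"
    unfolding filterlim_uminus_at_bot by simp
  then have "((\<lambda>t. exp (- c * t)) \<longlongrightarrow> 0) at_top"
    by (rule filterlim_compose[OF exp_at_bot])
  then show ?thesis
    by (rule tendsto_mult_left_zero)
qed

lemma fixed_point_asymptotically_stable:
  assumes "frobenius_norm W < 1" and fp: "is_fixed_point W b p"
  shows "asymptotically_stable W b p"
proof -
  define c where "c = 1 - frobenius_norm W"
  have "0 < c"
    using assms unfolding c_def by simp
  have decay: "norm (x t - p) \<le> exp (- c * t) * norm (x 0 - p)"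
    if "is_trajectory W b x" "0 \<le> t" for x t
    using trajectory_exp_decay[OF fp that] unfolding c_def .
  have nonexpanding: "norm (x t - p) \<le> norm (x 0 - p)" if "is_trajectory W b x" "0 \<le> t" for x t
  proof -
    have "exp (- c * t) \<le> 1"
      using \<open>0 < c\<close> \<open>0 \<le> t\<close> by simp
    then have "exp (- c * t) * norm (x 0 - p) \<le> norm (x 0 - p)"
      by (simp add: mult_left_le_one_le)
    then show ?thesis
      using decay[OF that] by linarith
  qed
  have "lyapunov_stable W b p"
    unfolding lyapunov_stable_def
  proof (intro allI impI)
    fix \<epsilon> :: real
    assume "0 < \<epsilon>"
    then show "\<exists>\<delta>>0. \<forall>x. is_trajectory W b x \<and> norm (x 0 - p) < \<delta> \<longrightarrow>
        (\<forall>t\<ge>0. norm (x t - p) < \<epsilon>)"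
      using nonexpanding le_less_trans by blast
  qed
  moreover have converges: "(x \<longlongrightarrow> p) at_top" if "is_trajectory W b x" for x
  proof -
    have "\<forall>\<^sub>F t in at_top. norm (x t - p) \<le> exp (- c * t) * norm (x 0 - p)"
      using eventually_ge_at_top[of 0] by (rule eventually_mono) (rule decay[OF that])
    then have "((\<lambda>t. x t - p) \<longlongrightarrow> 0) at_top"
      by (rule Lim_null_comparison[OF _ tendsto_exp_decay_at_top[OF \<open>0 < c\<close>]])
    then show ?thesis
      by (rule Lim_null[THEN iffD2])
  qed
  have "attractive W b p"
    unfolding attractive_def using converges zero_less_one by blast
  ultimately show ?thesis
    using fp unfolding asymptotically_stable_def by simp
qed

lemma matrix_vector_mult_component: "(W *v x) $ j = (\<Sum>k\<in>UNIV. W $ j $ k * x $ k)"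
  by (simp add: matrix_vector_mult_def)

lemma dale_mult_excitatory_nonneg:
  assumes "dale W E" and "\<And>k. 0 \<le> y $ k" and "\<And>k. k \<notin> E \<Longrightarrow> y $ k = 0"
  shows "0 \<le> (W *v y) $ j"
  unfolding matrix_vector_mult_component
  using assms unfolding dale_def by (intro sum_nonneg) (metis mult_eq_0_iff mult_nonneg_nonneg order_refl)

lemma supp_plus_fixed_point_in_graph_code:
  assumes dale: "dale W E" and "nonneg_vec b" and fp: "is_fixed_point W b x"
  shows "supp_plus E x \<in> graph_code (GE_arc W E) E (E_U W E)"
proof -
  have "j \<in> supp_plus E x"
    if "i \<in> supp_plus E x" "GE_arc W E i j" "j \<in> E_U W E" for i j
  proof -
    have terms_nonneg: "0 \<le> W $ j $ k * x $ k" for k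
      using dale \<open>j \<in> E_U W E\<close> fixed_point_nonneg[OF fp, of k]
      unfolding dale_def E_U_def by (cases "k \<in> E") auto
    have "0 < W $ j $ i * x $ i"
      using that unfolding GE_arc_def supp_plus_def by simp
    also have "\<dots> \<le> (W *v x) $ j"
      unfolding matrix_vector_mult_component
      by (rule member_le_sum) (simp_all add: terms_nonneg)
    also have "\<dots> \<le> (W *v x + b) $ j"
      using \<open>nonneg_vec b\<close> unfolding nonneg_vec_def by simp
    also have "\<dots> \<le> x $ j"
      using fp unfolding is_fixed_point_def by (metis max.cobounded2 relu_component)
    finally show ?thesis
      using \<open>j \<in> E_U W E\<close> unfolding supp_plus_def E_U_def by simp
  qed
  then show ?thesis
    unfolding graph_code_def out_nbhd_def supp_plus_def by blast
qed

lemma fixed_point_of_subsolution: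
  assumes "nonneg_vec x" and "\<And>j. (W *v x) $ j \<le> x $ j"
  shows "nonneg_vec (x - W *v x) \<and> is_fixed_point W (x - W *v x) x"
  using assms unfolding nonneg_vec_def is_fixed_point_def
  by (simp add: vec_eq_iff max_absorb2)

lemma graph_code_closed_mult_nonpos:
  assumes dale: "dale W E" and \<sigma>: "\<sigma> \<in> graph_code (GE_arc W E) E (E_U W E)"
    and "j \<in> E_U W E" and "j \<notin> \<sigma>"
    and "\<And>k. 0 \<le> y $ k" and "\<And>k. k \<notin> \<sigma> \<Longrightarrow> y $ k = 0"
  shows "(W *v y) $ j \<le> 0"
proof -
  have "W $ j $ k \<le> 0" if "k \<in> \<sigma>" for k
  proof (rule ccontr)
    assume "\<not> W $ j $ k \<le> 0"
    then have "GE_arc W E k j"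
      using that \<sigma> assms(3,4) unfolding graph_code_def GE_arc_def E_U_def by auto
    then show False
      using that \<sigma> assms(3,4) unfolding graph_code_def out_nbhd_def by blast
  qed
  then show ?thesis
    unfolding matrix_vector_mult_component using assms(5,6)
    by (intro sum_nonpos) (metis mult_nonpos_nonneg mult_zero_right)
qed

lemma ex_subsolution_supported_on:
  assumes dale: "dale W E" and "\<sigma> \<subseteq> E" and "frobenius_norm W < 1"
  obtains y where "\<And>k. 0 \<le> y $ k" and "\<And>k. k \<notin> \<sigma> \<Longrightarrow> y $ k = 0"
    and "\<And>i. i \<in> \<sigma> \<Longrightarrow> 0 < y $ i" and "\<And>i. i \<in> \<sigma> \<Longrightarrow> (W *v y) $ i \<le> y $ i"
proof -
  text \<open>Take the fixed point of the network whose rows outside \<open>\<sigma>\<close> are deleted, with unit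
    input on \<open>\<sigma>\<close>; deleting rows can only decrease the Frobenius norm.\<close>
  define W\<sigma> where "W\<sigma> = (\<chi> i. if i \<in> \<sigma> then W $ i else 0)"
  define c :: "real^_" where "c = (\<chi> i. if i \<in> \<sigma> then 1 else 0)"
  have "frobenius_norm W\<sigma> < 1"
    using frobenius_norm_mono_rows[of W\<sigma> W] assms(3) unfolding W\<sigma>_def by fastforce
  then obtain y where fp: "is_fixed_point W\<sigma> c y"
    using ex1_fixed_point by blast
  have "(W\<sigma> *v y) $ i = (if i \<in> \<sigma> then (W *v y) $ i else 0)" for i
    by (simp add: W\<sigma>_def matrix_vector_mult_component)
  moreover have "y $ i = relu (W\<sigma> *v y + c) $ i" for i
    using fp unfolding is_fixed_point_def by (rule arg_cong)
  ultimately have y_eq: "y $ i = max 0 ((if i \<in> \<sigma> then (W *v y) $ i else 0) + c $ i)" for i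
    by simp
  have y_nonneg: "0 \<le> y $ k" for k
    by (rule fixed_point_nonneg[OF fp])
  have y_outside: "y $ k = 0" if "k \<notin> \<sigma>" for k
    using y_eq[of k] that by (simp add: c_def)
  have "0 \<le> (W *v y) $ i" for i
    using y_outside assms(2) by (intro dale_mult_excitatory_nonneg[OF dale y_nonneg]) blast
  then have "y $ i = (W *v y) $ i + 1 \<and> 0 \<le> (W *v y) $ i" if "i \<in> \<sigma>" for i
    using y_eq[of i] that by (simp add: c_def)
  then show ?thesis
    using that y_nonneg y_outside by fastforce
qed

lemma ex_dominating_scale:
  fixes a d :: "'i::finite \<Rightarrow> real"
  assumes "\<And>j. 0 \<le> d j"
  obtains M where "0 < M" and "\<And>j. \<bar>a j\<bar> \<le> M" and "\<And>j. 0 < d j \<Longrightarrow> \<bar>a j\<bar> \<le> M * d j"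
proof
  define M where "M = 1 + (\<Sum>j\<in>UNIV. \<bar>a j\<bar> + \<bar>a j\<bar> / d j)"
  have terms_nonneg: "0 \<le> \<bar>a j\<bar> + \<bar>a j\<bar> / d j" for j
    using assms[of j] by simp
  have term_le: "\<bar>a j\<bar> + \<bar>a j\<bar> / d j \<le> M - 1" for j
    unfolding M_def using member_le_sum[of j UNIV "\<lambda>j. \<bar>a j\<bar> + \<bar>a j\<bar> / d j"] terms_nonneg
    by simp
  show "0 < M"
    unfolding M_def using terms_nonneg by (simp add: sum_nonneg add_pos_nonneg)
  show "\<bar>a j\<bar> \<le> M" for j
    using term_le[of j] assms[of j] by (smt (verit) divide_nonneg_nonneg abs_ge_zero)
  show "\<bar>a j\<bar> \<le> M * d j" if "0 < d j" for j
  proof -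
    have "\<bar>a j\<bar> / d j \<le> M"
      using term_le[of j] abs_ge_zero[of "a j"] by linarith
    then show ?thesis
      using that by (simp add: divide_le_eq)
  qed
qed

definition inhibitory_indicator :: "'n set \<Rightarrow> real^'n" where
  "inhibitory_indicator E = (\<chi> k. if k \<in> E then 0 else 1)"

lemma dale_inhibitory_input:
  assumes "dale W E"
  shows "(W *v inhibitory_indicator E) $ j = (\<Sum>k\<in>-E. W $ j $ k)"
    and "(W *v inhibitory_indicator E) $ j \<le> 0"
proof -
  show sum_eq: "(W *v inhibitory_indicator E) $ j = (\<Sum>k\<in>-E. W $ j $ k)"
    by (simp add: inhibitory_indicator_def matrix_vector_mult_component if_distrib
        sum.If_cases Compl_eq)
  show "(W *v inhibitory_indicator E) $ j \<le> 0"
    unfolding sum_eq using assms by (intro sum_nonpos) (simp add: dale_def)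
qed

lemma dale_uninhibited_in_E_U:
  assumes "dale W E" and "j \<in> E" and "(W *v inhibitory_indicator E) $ j = 0"
  shows "j \<in> E_U W E"
proof -
  have "(\<Sum>k\<in>-E. - W $ j $ k) = 0"
    using assms(3) dale_inhibitory_input(1)[OF assms(1)] by (simp add: sum_negf)
  moreover have "\<forall>k\<in>-E. 0 \<le> - W $ j $ k"
    using assms(1) by (simp add: dale_def)
  ultimately show ?thesis
    using assms(2) sum_nonneg_eq_0_iff[of "-E" "\<lambda>k. - W $ j $ k"] by (simp add: E_U_def)
qed

text \<open>Driving the inhibitory neurons at a large level \<open>M\<close> silences every excitatory neuron
  outside \<open>\<sigma>\<close> that receives inhibition; the uninhibited ones receive no excitation from \<open>\<sigma>\<close>
  because \<open>\<sigma>\<close> is closed.\<close>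
lemma inhibited_subsolution:
  fixes M :: real
  assumes dale: "dale W E" and \<sigma>: "\<sigma> \<in> graph_code (GE_arc W E) E (E_U W E)"
    and y_nonneg: "\<And>k. 0 \<le> y $ k" and y_outside: "\<And>k. k \<notin> \<sigma> \<Longrightarrow> y $ k = 0"
    and y_sub: "\<And>i. i \<in> \<sigma> \<Longrightarrow> (W *v y) $ i \<le> y $ i"
    and "0 < M" and M_bound: "\<bar>(W *v y) $ j\<bar> \<le> M"
    and M_inhibits: "(W *v inhibitory_indicator E) $ j < 0 \<Longrightarrow>
      \<bar>(W *v y) $ j\<bar> \<le> - M * (W *v inhibitory_indicator E) $ j"
  defines "x \<equiv> y + M *\<^sub>R inhibitory_indicator E"
  shows "(W *v x) $ j \<le> x $ j"
proof -
  let ?inh = "(W *v inhibitory_indicator E) $ j"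
  have "\<sigma> \<subseteq> E"
    using \<sigma> by (simp add: graph_code_def)
  have Wx: "(W *v x) $ j = (W *v y) $ j + M * ?inh"
    by (simp add: x_def matrix_vector_right_distrib matrix_vector_mult_scaleR)
  have "M * ?inh \<le> 0"
    using dale_inhibitory_input(2)[OF dale] \<open>0 < M\<close> by (simp add: mult_nonneg_nonpos)
  consider "j \<in> \<sigma>" | "j \<notin> E" | "j \<in> E" "j \<notin> \<sigma>" "?inh < 0" | "j \<in> E" "j \<notin> \<sigma>" "?inh = 0"
    using dale_inhibitory_input(2)[OF dale, of j] by fastforce
  then show ?thesis
  proof cases
    case 1
    then show ?thesis
      using Wx y_sub[of j] \<open>M * ?inh \<le> 0\<close> \<open>\<sigma> \<subseteq> E\<close>
      by (auto simp: x_def inhibitory_indicator_def)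
  next
    case 2
    then have "x $ j = M"
      using y_outside[of j] \<open>\<sigma> \<subseteq> E\<close> by (auto simp: x_def inhibitory_indicator_def)
    then show ?thesis
      using Wx M_bound \<open>M * ?inh \<le> 0\<close> by (simp add: abs_le_iff)
  next
    case 3
    then have "x $ j = 0"
      using y_outside[of j] by (simp add: x_def inhibitory_indicator_def)
    then show ?thesis
      using Wx M_inhibits 3 by (simp add: abs_le_iff)
  next
    case 4
    then have "(W *v y) $ j \<le> 0"
      using graph_code_closed_mult_nonpos[OF dale \<sigma>] dale_uninhibited_in_E_U[OF dale]
        y_nonneg y_outside by blast
    moreover have "x $ j = 0"
      using 4 y_outside[of j] by (simp add: x_def inhibitory_indicator_def)
    ultimately show ?thesis
      using Wx 4 by simp
  qed
qed

lemma graph_code_realized: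
  assumes dale: "dale W E" and "frobenius_norm W < 1"
    and \<sigma>: "\<sigma> \<in> graph_code (GE_arc W E) E (E_U W E)"
  shows "\<exists>b x. nonneg_vec b \<and> nonneg_vec x \<and> is_fixed_point W b x \<and> supp_plus E x = \<sigma>"
proof -
  have "\<sigma> \<subseteq> E"
    using \<sigma> by (simp add: graph_code_def)
  obtain y where y_nonneg: "\<And>k. 0 \<le> y $ k" and y_outside: "\<And>k. k \<notin> \<sigma> \<Longrightarrow> y $ k = 0"
    and y_pos: "\<And>i. i \<in> \<sigma> \<Longrightarrow> 0 < y $ i" and y_sub: "\<And>i. i \<in> \<sigma> \<Longrightarrow> (W *v y) $ i \<le> y $ i"
    using ex_subsolution_supported_on[OF dale \<open>\<sigma> \<subseteq> E\<close> assms(2)] by blast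
  obtain M where "0 < M" and "\<And>j. \<bar>(W *v y) $ j\<bar> \<le> M"
    and "\<And>j. 0 < - (W *v inhibitory_indicator E) $ j \<Longrightarrow>
      \<bar>(W *v y) $ j\<bar> \<le> M * - (W *v inhibitory_indicator E) $ j"
    using ex_dominating_scale[of "\<lambda>j. - (W *v inhibitory_indicator E) $ j"]
      dale_inhibitory_input(2)[OF dale] by (metis neg_0_le_iff_le)
  then have "(W *v x) $ j \<le> x $ j" if "x = y + M *\<^sub>R inhibitory_indicator E" for x j
    using that inhibited_subsolution[OF dale \<sigma> y_nonneg y_outside y_sub \<open>0 < M\<close>] by simp
  moreover have "nonneg_vec (y + M *\<^sub>R inhibitory_indicator E)"
    using y_nonneg \<open>0 < M\<close> by (simp add: nonneg_vec_def inhibitory_indicator_def)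
  moreover have "supp_plus E (y + M *\<^sub>R inhibitory_indicator E) = \<sigma>"
    using y_pos y_outside \<open>\<sigma> \<subseteq> E\<close>
    by (auto simp: supp_plus_def inhibitory_indicator_def) (metis less_irrefl)
  ultimately show ?thesis
    using fixed_point_of_subsolution by blast
qed

theorem mainTheorem5:
  fixes W :: "real^'n^'n" and E :: "'n set"
  assumes "dale W E"
    and "invertible W"
    and "ground_assumption W"
    and "frobenius_norm W < 1"
  shows "(\<forall>b. nonneg_vec b \<longrightarrow>
            (\<exists>!x. is_fixed_point W b x) \<and>
            (\<forall>x. is_fixed_point W b x \<longrightarrow> globally_exponentially_stable W b x) \<and>
            (\<forall>x. is_fixed_point W b x \<longrightarrow> asymptotically_stable W b x))
       \<and> comb_code W E = stable_comb_code W E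
       \<and> stable_comb_code W E = graph_code (GE_arc W E) E (E_U W E)"
proof -
  note dale = assms(1) and contractive = assms(4)
  have stable: "asymptotically_stable W b x" if "is_fixed_point W b x" for b x
    using fixed_point_asymptotically_stable[OF contractive that] .
  have code_eq_stable: "comb_code W E = stable_comb_code W E"
    unfolding comb_code_def stable_comb_code_def
    using stable unfolding asymptotically_stable_def by blast
  have "comb_code W E \<subseteq> graph_code (GE_arc W E) E (E_U W E)"
    unfolding comb_code_def using supp_plus_fixed_point_in_graph_code[OF dale] by blast
  moreover have "graph_code (GE_arc W E) E (E_U W E) \<subseteq> comb_code W E"
    unfolding comb_code_def using graph_code_realized[OF dale contractive] by blast
  ultimately show ?thesis
    using ex1_fixed_point[OF contractive] stable code_eq_stable
      fixed_point_globally_exponentially_stable[OF contractive] by blast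
qed

end
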